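(* Let $L=\{<,\ldots\}$ be a countable first order language containing a binary relation symbol $<$, and let $T$ be a complete $L$-theory with Skolem functions in which $<$ is interpreted as a linear order. Then: (i) If $T$ satisfies the inaccessibility scheme, then $T$ satisfies the regularity scheme for formulas with $|\bar{x}|=1$. (ii) If $T$ satisfies the regularity scheme for formulas with $|\bar{x}|=1$, then $T$ satisfies the regularity scheme (for formulas with $\bar{x}$ of arbitrary finite length).
   Context: For a formula $\varphi(\bar{x},\bar{t})$ and tuples $\bar{y}_0,\bar{y}_1$ of the same length as $\bar{x}$, write $E_{\varphi}(\bar{y}_0,\bar{y}_1;z_0)$ for $(\forall \bar{t}<z_0)(\varphi(\bar{y}_0,\bar{t})\leftrightarrow\varphi(\bar{y}_1,\bar{t}))$; here $\bar{t}<z_0$ means every coordinate of $\bar{t}$ is $<z_0$. $T$ satisfies the inaccessibility scheme if for every $L$-formula $\varphi(\bar{x},\bar{t})$ (with $\bar{x}$ of any finite length), $T\models (\forall z_0)(\exists z_1>z_0)(\forall\bar{y}_0)(\exists\bar{y}_1<z_1)E_{\varphi}(\bar{y}_0,\bar{y}_1;z_0)$. "$T$ has Skolem functions" means that for every formula $\theta(y,\bar{x})$ there is a term $\tau(\bar{x})$ of $L$ with $T\models \forall\bar{x}(\exists y\,\theta(y,\bar{x})\to\theta(\tau(\bar{x}),\bar{x}))$. For $\bar{x}=(x_1,\ldots,x_n)$ and a formula $\chi(\bar{x})$ with parameters from a model $M$, $\chi(\bar{x})$ is $\bar{x}$-unbounded in $M$ if $M\models(\forall\alpha_1)(\exists x_1>\alpha_1)\cdots(\forall\alpha_n)(\exists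 x_n>\alpha_n)\chi(\bar{x})$; otherwise it is $\bar{x}$-bounded. $T$ satisfies the regularity scheme (for formulas with $|\bar{x}|=k$, resp. for all $\bar{x}$) if for every $L$-formula $\varphi(\bar{x},\bar{y},\bar{t})$ (with $|\bar{x}|=k$, resp. arbitrary), every model $M\models T$, every $y_0\in M$ and every $\bar{b}\in M$ with $|\bar{b}|=|\bar{t}|$: if $(\exists\bar{y}<y_0)\varphi(\bar{x},\bar{y},\bar{b})$ is $\bar{x}$-unbounded in $M$, then there is $\bar{y}_1\in M$ with $\bar{y}_1<y_0$ (coordinatewise) such that $\varphi(\bar{x},\bar{y}_1,\bar{b})$ is $\bar{x}$-unbounded in $M$. *)

theory Defs
  imports Main "HOL-Library.Countable_Set"
begin

datatype 'f trm = Var nat | Fn 'f "'f trm list"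

datatype ('f, 'r) fm =
    Eq "'f trm" "'f trm"
  | Rel 'r "'f trm list"
  | Neg "('f, 'r) fm"
  | Conj "('f, 'r) fm" "('f, 'r) fm"
  | Ex nat "('f, 'r) fm"

fun wf_trm :: "('f \<Rightarrow> nat) \<Rightarrow> 'f trm \<Rightarrow> bool" where
  "wf_trm fa (Var n) = True"
| "wf_trm fa (Fn f ts) = (length ts = fa f \<and> list_all (wf_trm fa) ts)"

fun vars_trm :: "'f trm \<Rightarrow> nat set" where
  "vars_trm (Var n) = {n}"
| "vars_trm (Fn f ts) = \<Union> (set (map vars_trm ts))"

fun wf_fm :: "('f \<Rightarrow> nat) \<Rightarrow> ('r \<Rightarrow> nat) \<Rightarrow> ('f, 'r) fm \<Rightarrow> bool" where
  "wf_fm fa ra (Eq s t) = (wf_trm fa s \<and> wf_trm fa t)"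
| "wf_fm fa ra (Rel r ts) = (length ts = ra r \<and> list_all (wf_trm fa) ts)"
| "wf_fm fa ra (Neg p) = wf_fm fa ra p"
| "wf_fm fa ra (Conj p q) = (wf_fm fa ra p \<and> wf_fm fa ra q)"
| "wf_fm fa ra (Ex x p) = wf_fm fa ra p"

fun fv :: "('f, 'r) fm \<Rightarrow> nat set" where
  "fv (Eq s t) = vars_trm s \<union> vars_trm t"
| "fv (Rel r ts) = \<Union> (set (map vars_trm ts))"
| "fv (Neg p) = fv p"
| "fv (Conj p q) = fv p \<union> fv q"
| "fv (Ex x p) = fv p - {x}"

definition L_sentence :: "('f \<Rightarrow> nat) \<Rightarrow> ('r \<Rightarrow> nat) \<Rightarrow> ('f, 'r) fm \<Rightarrow> bool" where
  "L_sentence fa ra \<sigma> \<longleftrightarrow> wf_fm fa ra \<sigma> \<and> fv \<sigma> = {}"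

record ('a, 'f, 'r) struc =
  U :: "'a set"
  FI :: "'f \<Rightarrow> 'a list \<Rightarrow> 'a"
  RI :: "'r \<Rightarrow> 'a list \<Rightarrow> bool"

definition is_struct :: "('f \<Rightarrow> nat) \<Rightarrow> ('a, 'f, 'r) struc \<Rightarrow> bool" where
  "is_struct fa M \<longleftrightarrow> U M \<noteq> {} \<and>
     (\<forall>f as. length as = fa f \<and> set as \<subseteq> U M \<longrightarrow> FI M f as \<in> U M)"

definition is_env :: "('a, 'f, 'r) struc \<Rightarrow> (nat \<Rightarrow> 'a) \<Rightarrow> bool" where
  "is_env M e \<longleftrightarrow> (\<forall>v. e v \<in> U M)"

fun evalt :: "('a, 'f, 'r) struc \<Rightarrow> (nat \<Rightarrow> 'a) \<Rightarrow> 'f trm \<Rightarrow> 'a" where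
  "evalt M e (Var n) = e n"
| "evalt M e (Fn f ts) = FI M f (map (evalt M e) ts)"

fun sat :: "('a, 'f, 'r) struc \<Rightarrow> (nat \<Rightarrow> 'a) \<Rightarrow> ('f, 'r) fm \<Rightarrow> bool" where
  "sat M e (Eq s t) = (evalt M e s = evalt M e t)"
| "sat M e (Rel r ts) = RI M r (map (evalt M e) ts)"
| "sat M e (Neg p) = (\<not> sat M e p)"
| "sat M e (Conj p q) = (sat M e p \<and> sat M e q)"
| "sat M e (Ex x p) = (\<exists>a\<in>U M. sat M (e(x := a)) p)"

definition models :: "'a itself \<Rightarrow> ('f \<Rightarrow> nat) \<Rightarrow> ('r \<Rightarrow> nat) \<Rightarrow> ('f, 'r) fm set
    \<Rightarrow> ('a, 'f, 'r) struc set" where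
  "models _ fa ra T = {M. is_struct fa M \<and> (\<forall>\<sigma>\<in>T. \<forall>e. is_env M e \<longrightarrow> sat M e \<sigma>)}"

text \<open>Semantic consequence \<open>T \<Turnstile> \<phi>\<close> (universal closure), relative to models in \<open>'a\<close>.\<close>
definition entails :: "'a itself \<Rightarrow> ('f \<Rightarrow> nat) \<Rightarrow> ('r \<Rightarrow> nat) \<Rightarrow> ('f, 'r) fm set
    \<Rightarrow> ('f, 'r) fm \<Rightarrow> bool" where
  "entails A fa ra T \<phi> \<longleftrightarrow> (\<forall>M\<in>models A fa ra T. \<forall>e. is_env M e \<longrightarrow> sat M e \<phi>)"

definition complete_theory :: "'a itself \<Rightarrow> ('f \<Rightarrow> nat) \<Rightarrow> ('r \<Rightarrow> nat) \<Rightarrow> ('f, 'r) fm set \<Rightarrow> bool" where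
  "complete_theory A fa ra T \<longleftrightarrow>
     (\<forall>\<sigma>\<in>T. L_sentence fa ra \<sigma>) \<and> models A fa ra T \<noteq> {} \<and>
     (\<forall>\<sigma>. L_sentence fa ra \<sigma> \<longrightarrow> entails A fa ra T \<sigma> \<or> entails A fa ra T (Neg \<sigma>))"

text \<open>Skolem functions: for every formula \<open>\<theta>(y, x)\<close> there is an L-term \<open>\<tau>(x)\<close> with
  \<open>T \<Turnstile> \<forall>x (\<exists>y \<theta>(y,x) \<longrightarrow> \<theta>(\<tau>(x),x))\<close> (substitution written semantically).\<close>
definition has_skolem :: "'a itself \<Rightarrow> ('f \<Rightarrow> nat) \<Rightarrow> ('r \<Rightarrow> nat) \<Rightarrow> ('f, 'r) fm set \<Rightarrow> bool" where
  "has_skolem A fa ra T \<longleftrightarrow>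
     (\<forall>\<theta> y. wf_fm fa ra \<theta> \<longrightarrow>
        (\<exists>\<tau>. wf_trm fa \<tau> \<and> vars_trm \<tau> \<subseteq> fv \<theta> - {y} \<and>
           (\<forall>M\<in>models A fa ra T. \<forall>e. is_env M e \<longrightarrow>
              (\<exists>a\<in>U M. sat M (e(y := a)) \<theta>) \<longrightarrow> sat M (e(y := evalt M e \<tau>)) \<theta>)))"

abbreviation ltM :: "('a, 'f, 'r) struc \<Rightarrow> 'r \<Rightarrow> 'a \<Rightarrow> 'a \<Rightarrow> bool" where
  "ltM M lt a b \<equiv> RI M lt [a, b]"

definition lt_linear :: "'a itself \<Rightarrow> ('f \<Rightarrow> nat) \<Rightarrow> ('r \<Rightarrow> nat) \<Rightarrow> 'r \<Rightarrow> ('f, 'r) fm set \<Rightarrow> bool" where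
  "lt_linear A fa ra lt T \<longleftrightarrow>
     (\<forall>M\<in>models A fa ra T.
        (\<forall>a\<in>U M. \<not> ltM M lt a a) \<and>
        (\<forall>a\<in>U M. \<forall>b\<in>U M. \<forall>c\<in>U M. ltM M lt a b \<and> ltM M lt b c \<longrightarrow> ltM M lt a c) \<and>
        (\<forall>a\<in>U M. \<forall>b\<in>U M. ltM M lt a b \<or> a = b \<or> ltM M lt b a))"

definition assign :: "(nat \<Rightarrow> 'a) \<Rightarrow> nat list \<Rightarrow> 'a list \<Rightarrow> nat \<Rightarrow> 'a" where
  "assign e xs as = (\<lambda>v. case map_of (zip xs as) v of None \<Rightarrow> e v | Some a \<Rightarrow> a)"

text \<open>Inaccessibility scheme (T \<Turnstile> the displayed sentence, unfolded semantically).\<close>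
definition inaccessible :: "'a itself \<Rightarrow> ('f \<Rightarrow> nat) \<Rightarrow> ('r \<Rightarrow> nat) \<Rightarrow> 'r \<Rightarrow> ('f, 'r) fm set \<Rightarrow> bool" where
  "inaccessible A fa ra lt T \<longleftrightarrow>
     (\<forall>\<phi> xs ts. wf_fm fa ra \<phi> \<and> distinct (xs @ ts) \<and> fv \<phi> \<subseteq> set (xs @ ts) \<longrightarrow>
        (\<forall>M\<in>models A fa ra T. \<forall>e. is_env M e \<longrightarrow>
          (\<forall>z0\<in>U M. \<exists>z1\<in>U M. ltM M lt z0 z1 \<and>
             (\<forall>ys0. length ys0 = length xs \<and> set ys0 \<subseteq> U M \<longrightarrow>
               (\<exists>ys1. length ys1 = length xs \<and> set ys1 \<subseteq> U M \<and> (\<forall>y\<in>set ys1. ltM M lt y z1) \<and>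
                 (\<forall>ts'. length ts' = length ts \<and> set ts' \<subseteq> U M \<and> (\<forall>t\<in>set ts'. ltM M lt t z0) \<longrightarrow>
                   (sat M (assign e (xs @ ts) (ys0 @ ts')) \<phi> \<longleftrightarrow>
                    sat M (assign e (xs @ ts) (ys1 @ ts')) \<phi>)))))))"

text \<open>\<open>unb M lt n P\<close>: \<open>(\<forall>\<alpha>1)(\<exists>x1>\<alpha>1)\<dots>(\<forall>\<alpha>n)(\<exists>xn>\<alpha>n) P [x1,\<dots>,xn]\<close> holds in M.\<close>
fun unb :: "('a, 'f, 'r) struc \<Rightarrow> 'r \<Rightarrow> nat \<Rightarrow> ('a list \<Rightarrow> bool) \<Rightarrow> bool" where
  "unb M lt 0 P = P []"
| "unb M lt (Suc n) P =
     (\<forall>\<alpha>\<in>U M. \<exists>x\<in>U M. ltM M lt \<alpha> x \<and> unb M lt n (\<lambda>xs. P (x # xs)))"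

definition regular :: "'a itself \<Rightarrow> ('f \<Rightarrow> nat) \<Rightarrow> ('r \<Rightarrow> nat) \<Rightarrow> 'r \<Rightarrow> ('f, 'r) fm set \<Rightarrow> nat \<Rightarrow> bool" where
  "regular A fa ra lt T k \<longleftrightarrow>
     (\<forall>\<phi> xs ys ts. length xs = k \<and> wf_fm fa ra \<phi> \<and> distinct (xs @ ys @ ts) \<and>
         fv \<phi> \<subseteq> set (xs @ ys @ ts) \<longrightarrow>
       (\<forall>M\<in>models A fa ra T. \<forall>e. is_env M e \<longrightarrow>
         (\<forall>y0\<in>U M. \<forall>bs. length bs = length ts \<and> set bs \<subseteq> U M \<longrightarrow>
            unb M lt k (\<lambda>as. \<exists>cs. length cs = length ys \<and> set cs \<subseteq> U M \<and>
                 (\<forall>c\<in>set cs. ltM M lt c y0) \<and> sat M (assign e (xs @ ys @ ts) (as @ cs @ bs)) \<phi>)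
            \<longrightarrow> (\<exists>cs. length cs = length ys \<and> set cs \<subseteq> U M \<and> (\<forall>c\<in>set cs. ltM M lt c y0) \<and>
                  unb M lt k (\<lambda>as. sat M (assign e (xs @ ys @ ts) (as @ cs @ bs)) \<phi>)))))"

end

theory Submission
  imports Defs
begin

text \<open>
  (i) Suppose no tuple \<open>c < y0\<close> works, i.e. for each such \<open>c\<close> the instance \<open>\<phi>(x, c, b)\<close> holds
  only for \<open>x\<close> below some threshold \<open>\<alpha>\<close>. The formula \<open>\<not> (\<exists>x > w. \<phi>(x, c, b))\<close> is
  subject to inaccessibility in \<open>w\<close>: with \<open>z0\<close> above \<open>y0\<close> and \<open>b\<close>, there is \<open>z1\<close> such
  that every threshold can be replaced by one below \<open>z1\<close>, simultaneously for all parameters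
  below \<open>z0\<close>. A witness \<open>x > z1\<close> of the hypothesis, together with its tuple \<open>c\<close>, contradicts the
  threshold of \<open>c\<close>.

  (ii) Induction on the length of \<open>x\<close>. Regularity for the last \<open>k\<close> variables, with the first
  one as an extra parameter, moves the choice of \<open>c\<close> inside their quantifiers; since
  unboundedness of \<open>\<phi>(x1, -, c, b)\<close> is first-order, regularity in the single variable \<open>x1\<close>
  then yields one \<open>c\<close> that works for all \<open>k + 1\<close> variables.
\<close>

lemma evalt_cong: "(\<forall>v\<in>vars_trm t. e v = e' v) \<Longrightarrow> evalt M e t = evalt M e' t"
proof (induction t)
  case (Fn f ts)
  have "map (evalt M e) ts = map (evalt M e') ts"
    by (rule map_cong[OF refl]) (use Fn in auto)
  then show ?case by (simp only: evalt.simps)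
qed simp

lemma sat_cong: "(\<forall>v\<in>fv p. e v = e' v) \<Longrightarrow> sat M e p = sat M e' p"
proof (induction p arbitrary: e e')
  case (Eq s t) then show ?case using evalt_cong[of s e e' M] evalt_cong[of t e e' M] by auto
next
  case (Rel r ts)
  have "map (evalt M e) ts = map (evalt M e') ts"
    by (rule map_cong[OF refl], rule evalt_cong) (use Rel in auto)
  then show ?case by (simp only: sat.simps)
next
  case (Neg p) then show ?case by simp
next
  case (Conj p q) then show ?case by (metis UnCI fv.simps(4) sat.simps(4))
next
  case (Ex x p)
  have "\<And>a. sat M (e(x:=a)) p = sat M (e'(x:=a)) p" using Ex by (intro Ex.IH) auto
  then show ?case by simp
qed

lemma finite_vars_trm: "finite (vars_trm t)"
  by (induction t) auto

lemma finite_fv: "finite (fv p)"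
  by (induction p) (auto simp: finite_vars_trm)

lemma ex_distinct_fresh_vars:
  "finite (S :: nat set) \<Longrightarrow> \<exists>vs. length vs = k \<and> distinct vs \<and> set vs \<inter> S = {}"
proof (induction k arbitrary: S)
  case (Suc k)
  obtain v where "v \<notin> S" using Suc.prems ex_new_if_finite infinite_UNIV_nat by blast
  moreover obtain vs where "length vs = k" "distinct vs" "set vs \<inter> insert v S = {}"
    using Suc.IH[of "insert v S"] Suc.prems by auto
  ultimately show ?case by (intro exI[of _ "v # vs"]) auto
qed simp

lemma assign_Nil [simp]: "assign e [] as = e" "assign e xs [] = e"
  by (auto simp: assign_def)

lemma assign_Cons [simp]: "assign e (x # xs) (a # as) = (assign e xs as)(x := a)"
  by (auto simp: assign_def)

lemma assign_append:
  "length xs = length as \<Longrightarrow> assign e (xs @ ys) (as @ bs) = assign (assign e ys bs) xs as"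
  by (induction xs as rule: list_induct2) auto

lemma assign_fun_upd:
  assumes "v \<notin> set xs"
  shows "assign (e(v := c)) xs as = (assign e xs as)(v := c)"
proof -
  have "map_of (zip xs as) v = None"
    using assms by (auto simp: map_of_eq_None_iff dest: set_zip_leftD)
  then show ?thesis by (auto simp: assign_def split: option.splits)
qed

lemma assign_eq_if_set_zip_eq:
  assumes "distinct xs" "distinct xs'" "set (zip xs as) = set (zip xs' as')"
  shows "assign e xs as = assign e xs' as'"
proof -
  have "distinct (map fst (zip ys bs))" if "distinct ys" for ys :: "nat list" and bs :: "'a list"
    using that by (simp add: map_fst_zip_take)
  then have "map_of (zip xs as) = map_of (zip xs' as')"
    using assms(3) by (simp add: map_of_inject_set assms(1,2))
  then show ?thesis by (simp add: assign_def)
qed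

lemma assign_shift_first:
  assumes "distinct (x # xs @ ys @ ts)" "length as = length xs" "length cs = length ys"
  shows "assign e (x # xs @ ys @ ts) (a # as @ cs @ bs) = assign e (xs @ ys @ x # ts) (as @ cs @ a # bs)"
  by (rule assign_eq_if_set_zip_eq) (use assms in auto)

lemma assign_split_first:
  assumes "distinct (x # xs @ ys @ ts)" "length as = length xs" "length cs = length ys"
  shows "assign e (x # xs @ ys @ ts) (a # as @ cs @ bs) = assign (assign e (x # ys @ ts) (a # cs @ bs)) xs as"
proof -
  have "assign e (x # xs @ ys @ ts) (a # as @ cs @ bs) = assign e (xs @ x # ys @ ts) (as @ a # cs @ bs)"
    by (rule assign_eq_if_set_zip_eq) (use assms in auto)
  then show ?thesis using assms(2) by (simp add: assign_append)
qed

lemma unb_cong: "(\<And>as. length as = n \<Longrightarrow> P as \<longleftrightarrow> Q as) \<Longrightarrow> unb M lt n P \<longleftrightarrow> unb M lt n Q"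
proof (induction n arbitrary: P Q)
  case (Suc n)
  have "unb M lt n (\<lambda>as. P (x # as)) \<longleftrightarrow> unb M lt n (\<lambda>as. Q (x # as))" for x
    by (rule Suc.IH) (simp add: Suc.prems)
  then show ?case by simp
qed simp

lemma unb_1 [simp]: "unb M lt 1 P \<longleftrightarrow> (\<forall>\<alpha>\<in>U M. \<exists>x\<in>U M. ltM M lt \<alpha> x \<and> P [x])"
  by (simp add: One_nat_def)

lemma ex_strict_upper_bound:
  assumes "transp_on A R" "totalp_on A R" "A \<noteq> {}" "\<forall>a\<in>A. \<exists>b\<in>A. R a b" "set xs \<subseteq> A"
  shows "\<exists>z\<in>A. \<forall>x\<in>set xs. R x z"
  using assms(5)
proof (induction xs)
  case (Cons x xs)
  then obtain z where z: "z \<in> A" "\<forall>y\<in>set xs. R y z" by auto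
  obtain z' where z': "z' \<in> A" "R x z'" using assms(4) Cons.prems by auto
  show ?case
  proof (cases "R x z")
    case False
    then have "z = x \<or> R z x" using totalp_onD[OF assms(2), of x z] z Cons.prems by auto
    then have "R z z'" using transp_onD[OF assms(1), of z x z'] z z' Cons.prems by auto
    then have "\<forall>y\<in>set (x # xs). R y z'"
      using transp_onD[OF assms(1), of _ z z'] z z' Cons.prems by auto
    then show ?thesis using z' by blast
  qed (use z in auto)
qed (use assms(3) in auto)

lemma lt_linearD:
  assumes "lt_linear A fa ra lt T" "M \<in> models A fa ra T"
  shows "transp_on (U M) (ltM M lt)" "totalp_on (U M) (ltM M lt)"
  using assms unfolding lt_linear_def transp_on_def totalp_on_def by blast+

lemma models_U_nonempty: "M \<in> models A fa ra T \<Longrightarrow> U M \<noteq> {}"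
  by (simp add: models_def is_struct_def)

definition tuples_below :: "('a, 'f, 'r) struc \<Rightarrow> 'r \<Rightarrow> 'a \<Rightarrow> nat \<Rightarrow> 'a list set" where
  "tuples_below M lt z n = {cs. length cs = n \<and> set cs \<subseteq> U M \<and> (\<forall>c\<in>set cs. ltM M lt c z)}"

definition regular_below ::
    "('a, 'f, 'r) struc \<Rightarrow> 'r \<Rightarrow> nat \<Rightarrow> nat \<Rightarrow> 'a \<Rightarrow> ('a list \<Rightarrow> 'a list \<Rightarrow> bool) \<Rightarrow> bool" where
  "regular_below M lt k n y0 P \<longleftrightarrow>
     (unb M lt k (\<lambda>as. \<exists>cs\<in>tuples_below M lt y0 n. P as cs) \<longrightarrow>
      (\<exists>cs\<in>tuples_below M lt y0 n. unb M lt k (\<lambda>as. P as cs)))"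

lemma tuples_below_append:
  assumes "transp_on (U M) (ltM M lt)" "cs \<in> tuples_below M lt y n" "bs \<in> tuples_below M lt z m"
    "y \<in> U M" "z \<in> U M" "ltM M lt y z"
  shows "cs @ bs \<in> tuples_below M lt z (n + m)"
  using assms transp_onD[OF assms(1) _ assms(4,5) _ assms(6)] by (auto simp: tuples_below_def)

lemma regular_iff_regular_below:
  "regular A fa ra lt T k \<longleftrightarrow>
     (\<forall>\<phi> xs ys ts. length xs = k \<and> wf_fm fa ra \<phi> \<and> distinct (xs @ ys @ ts) \<and>
         fv \<phi> \<subseteq> set (xs @ ys @ ts) \<longrightarrow>
       (\<forall>M\<in>models A fa ra T. \<forall>e. is_env M e \<longrightarrow>
         (\<forall>y0\<in>U M. \<forall>bs. length bs = length ts \<and> set bs \<subseteq> U M \<longrightarrow>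
            regular_below M lt k (length ys) y0
              (\<lambda>as cs. sat M (assign e (xs @ ys @ ts) (as @ cs @ bs)) \<phi>))))"
  by (simp add: regular_def regular_below_def tuples_below_def)

lemma regularI:
  assumes "\<And>\<phi> xs ys ts M e y0 bs. length xs = k \<Longrightarrow> wf_fm fa ra \<phi> \<Longrightarrow> distinct (xs @ ys @ ts) \<Longrightarrow>
      fv \<phi> \<subseteq> set (xs @ ys @ ts) \<Longrightarrow> M \<in> models A fa ra T \<Longrightarrow> is_env M e \<Longrightarrow> y0 \<in> U M \<Longrightarrow>
      length bs = length ts \<Longrightarrow> set bs \<subseteq> U M \<Longrightarrow>
      regular_below M lt k (length ys) y0 (\<lambda>as cs. sat M (assign e (xs @ ys @ ts) (as @ cs @ bs)) \<phi>)"
  shows "regular A fa ra lt T k"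
  unfolding regular_iff_regular_below using assms by blast

lemma regularD:
  assumes "regular A fa ra lt T k" "length xs = k" "wf_fm fa ra \<phi>" "distinct (xs @ ys @ ts)"
    "fv \<phi> \<subseteq> set (xs @ ys @ ts)" "M \<in> models A fa ra T" "is_env M e" "y0 \<in> U M"
    "length bs = length ts" "set bs \<subseteq> U M"
  shows "regular_below M lt k (length ys) y0 (\<lambda>as cs. sat M (assign e (xs @ ys @ ts) (as @ cs @ bs)) \<phi>)"
  using assms unfolding regular_iff_regular_below by blast

lemma regular_0: "regular A fa ra lt T 0"
  unfolding regular_def by simp

lemma regular_below_cong:
  assumes "\<And>as cs. length as = k \<Longrightarrow> cs \<in> tuples_below M lt y0 n \<Longrightarrow> P as cs \<longleftrightarrow> Q as cs"
  shows "regular_below M lt k n y0 P \<longleftrightarrow> regular_below M lt k n y0 Q"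
proof -
  have "unb M lt k (\<lambda>as. \<exists>cs\<in>tuples_below M lt y0 n. P as cs) \<longleftrightarrow>
        unb M lt k (\<lambda>as. \<exists>cs\<in>tuples_below M lt y0 n. Q as cs)"
    by (intro unb_cong bex_cong refl) (use assms in blast)
  moreover have "(\<exists>cs\<in>tuples_below M lt y0 n. unb M lt k (\<lambda>as. P as cs)) \<longleftrightarrow>
                 (\<exists>cs\<in>tuples_below M lt y0 n. unb M lt k (\<lambda>as. Q as cs))"
    by (intro unb_cong bex_cong refl) (use assms in blast)
  ultimately show ?thesis by (simp add: regular_below_def)
qed

lemma regular_below_Suc:
  assumes tail: "\<And>a. a \<in> U M \<Longrightarrow> regular_below M lt k n y0 (\<lambda>as cs. P (a # as) cs)"
    and head: "regular_below M lt 1 n y0 (\<lambda>as cs. unb M lt k (\<lambda>as'. P (hd as # as') cs))"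
  shows "regular_below M lt (Suc k) n y0 P"
  unfolding regular_below_def
proof
  assume hyp: "unb M lt (Suc k) (\<lambda>as. \<exists>cs\<in>tuples_below M lt y0 n. P as cs)"
  have "\<forall>\<alpha>\<in>U M. \<exists>a\<in>U M. ltM M lt \<alpha> a \<and>
          (\<exists>cs\<in>tuples_below M lt y0 n. unb M lt k (\<lambda>as'. P (a # as') cs))"
  proof
    fix \<alpha> assume "\<alpha> \<in> U M"
    with hyp obtain a where "a \<in> U M" "ltM M lt \<alpha> a"
      and "unb M lt k (\<lambda>as'. \<exists>cs\<in>tuples_below M lt y0 n. P (a # as') cs)" by auto
    with tail[of a] show "\<exists>a\<in>U M. ltM M lt \<alpha> a \<and>
          (\<exists>cs\<in>tuples_below M lt y0 n. unb M lt k (\<lambda>as'. P (a # as') cs))"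
      unfolding regular_below_def by blast
  qed
  then show "\<exists>cs\<in>tuples_below M lt y0 n. unb M lt (Suc k) (\<lambda>as. P as cs)"
    using head by (simp add: regular_below_def)
qed

lemma regular_below_1I:
  assumes trans: "transp_on (U M) (ltM M lt)"
    and z1: "z1 \<in> U M"
    and thresholds: "\<And>\<alpha>. \<alpha> \<in> U M \<Longrightarrow> \<exists>\<alpha>'\<in>U M. ltM M lt \<alpha>' z1 \<and>
        (\<forall>cs\<in>tuples_below M lt y0 n. (\<forall>a\<in>U M. ltM M lt \<alpha> a \<longrightarrow> \<not> P [a] cs) \<longrightarrow>
                                      (\<forall>a\<in>U M. ltM M lt \<alpha>' a \<longrightarrow> \<not> P [a] cs))"
    and hyp: "unb M lt 1 (\<lambda>as. \<exists>cs\<in>tuples_below M lt y0 n. P as cs)"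
  shows "\<exists>cs\<in>tuples_below M lt y0 n. unb M lt 1 (\<lambda>as. P as cs)"
proof (rule ccontr)
  assume "\<not> ?thesis"
  then have dies_out: "\<forall>cs\<in>tuples_below M lt y0 n. \<exists>\<alpha>\<in>U M. \<forall>a\<in>U M. ltM M lt \<alpha> a \<longrightarrow> \<not> P [a] cs"
    by auto
  obtain a cs where a: "a \<in> U M" "ltM M lt z1 a" and cs: "cs \<in> tuples_below M lt y0 n" "P [a] cs"
    using hyp z1 by auto
  obtain \<alpha> where "\<alpha> \<in> U M" "\<forall>a\<in>U M. ltM M lt \<alpha> a \<longrightarrow> \<not> P [a] cs"
    using dies_out cs(1) by blast
  then obtain \<alpha>' where \<alpha>': "\<alpha>' \<in> U M" "ltM M lt \<alpha>' z1" "\<forall>a\<in>U M. ltM M lt \<alpha>' a \<longrightarrow> \<not> P [a] cs"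
    using thresholds cs(1) by blast
  have "ltM M lt \<alpha>' a" using transp_onD[OF trans \<alpha>'(1) z1 a(1) \<alpha>'(2) a(2)] .
  then show False using \<alpha>'(3) a(1) cs(2) by blast
qed

definition Forall :: "nat \<Rightarrow> ('f, 'r) fm \<Rightarrow> ('f, 'r) fm" where
  "Forall v p = Neg (Ex v (Neg p))"

fun unb_fm :: "'r \<Rightarrow> nat list \<Rightarrow> nat list \<Rightarrow> ('f, 'r) fm \<Rightarrow> ('f, 'r) fm" where
  "unb_fm lt (\<alpha> # \<alpha>s) (x # xs) p = Forall \<alpha> (Ex x (Conj (Rel lt [Var \<alpha>, Var x]) (unb_fm lt \<alpha>s xs p)))"
| "unb_fm lt _ _ p = p"

lemma wf_unb_fm: "ra lt = 2 \<Longrightarrow> wf_fm fa ra p \<Longrightarrow> wf_fm fa ra (unb_fm lt \<alpha>s xs p)"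
  by (induction lt \<alpha>s xs p rule: unb_fm.induct) (auto simp: Forall_def)

lemma fv_unb_fm: "length \<alpha>s = length xs \<Longrightarrow> fv (unb_fm lt \<alpha>s xs p) \<subseteq> fv p - set xs"
  by (induction \<alpha>s xs rule: list_induct2) (auto simp: Forall_def)

lemma sat_unb_fm:
  assumes "length \<alpha>s = length xs" "distinct \<alpha>s" "distinct xs" "set \<alpha>s \<inter> set xs = {}" "set \<alpha>s \<inter> fv p = {}"
  shows "sat M e (unb_fm lt \<alpha>s xs p) \<longleftrightarrow> unb M lt (length xs) (\<lambda>as. sat M (assign e xs as) p)"
  using assms
proof (induction \<alpha>s xs arbitrary: e rule: list_induct2)
  case (Cons \<alpha> \<alpha>s x xs)
  have \<alpha>x: "\<alpha> \<noteq> x" using Cons.prems by auto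
  have "sat M (e(\<alpha> := c, x := a)) (unb_fm lt \<alpha>s xs p) \<longleftrightarrow>
        unb M lt (length xs) (\<lambda>as. sat M (assign e (x # xs) (a # as)) p)" for c a
  proof -
    have "sat M (e(\<alpha> := c, x := a)) (unb_fm lt \<alpha>s xs p) \<longleftrightarrow>
          unb M lt (length xs) (\<lambda>as. sat M (assign (e(\<alpha> := c, x := a)) xs as) p)"
      using Cons by (intro Cons.IH) auto
    also have "\<dots> \<longleftrightarrow> unb M lt (length xs) (\<lambda>as. sat M (assign e (x # xs) (a # as)) p)"
    proof (rule unb_cong)
      fix as
      have "e(\<alpha> := c, x := a) = e(x := a, \<alpha> := c)" using \<alpha>x by auto
      then have "assign (e(\<alpha> := c, x := a)) xs as = (assign e (x # xs) (a # as))(\<alpha> := c)"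
        using Cons.prems by (simp add: assign_fun_upd)
      moreover have "sat M ((assign e (x # xs) (a # as))(\<alpha> := c)) p \<longleftrightarrow> sat M (assign e (x # xs) (a # as)) p"
        using Cons.prems by (intro sat_cong) auto
      ultimately show "sat M (assign (e(\<alpha> := c, x := a)) xs as) p \<longleftrightarrow> sat M (assign e (x # xs) (a # as)) p"
        by simp
    qed
    finally show ?thesis .
  qed
  then show ?case using \<alpha>x by (simp add: Forall_def)
qed simp

definition none_above :: "'r \<Rightarrow> nat \<Rightarrow> nat \<Rightarrow> ('f, 'r) fm \<Rightarrow> ('f, 'r) fm" where
  "none_above lt w x p = Neg (Ex x (Conj (Rel lt [Var w, Var x]) p))"

lemma sat_none_above:
  assumes "w \<noteq> x" "w \<notin> fv p"
  shows "sat M (e(w := \<alpha>)) (none_above lt w x p) \<longleftrightarrow> (\<forall>a\<in>U M. ltM M lt \<alpha> a \<longrightarrow> \<not> sat M (e(x := a)) p)"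
proof -
  have "sat M (e(w := \<alpha>, x := a)) p \<longleftrightarrow> sat M (e(x := a)) p" for a
    by (rule sat_cong) (use assms in auto)
  then show ?thesis using assms(1) by (simp add: none_above_def)
qed

lemma inaccessible_unaryD:
  assumes "inaccessible A fa ra lt T" "wf_fm fa ra \<chi>" "distinct (w # vs)" "fv \<chi> \<subseteq> set (w # vs)"
    "M \<in> models A fa ra T" "is_env M e" "z0 \<in> U M"
  shows "\<exists>z1\<in>U M. \<forall>\<alpha>\<in>U M. \<exists>\<alpha>'\<in>U M. ltM M lt \<alpha>' z1 \<and>
           (\<forall>ts\<in>tuples_below M lt z0 (length vs).
              sat M (assign e (w # vs) (\<alpha> # ts)) \<chi> \<longleftrightarrow> sat M (assign e (w # vs) (\<alpha>' # ts)) \<chi>)"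
proof -
  have "distinct ([w] @ vs)" "fv \<chi> \<subseteq> set ([w] @ vs)" using assms(3,4) by simp_all
  then obtain z1 where z1: "z1 \<in> U M" and swap: "\<forall>ys0. length ys0 = length [w] \<and> set ys0 \<subseteq> U M \<longrightarrow>
      (\<exists>ys1. length ys1 = length [w] \<and> set ys1 \<subseteq> U M \<and> (\<forall>y\<in>set ys1. ltM M lt y z1) \<and>
        (\<forall>ts. length ts = length vs \<and> set ts \<subseteq> U M \<and> (\<forall>t\<in>set ts. ltM M lt t z0) \<longrightarrow>
          (sat M (assign e ([w] @ vs) (ys0 @ ts)) \<chi> \<longleftrightarrow> sat M (assign e ([w] @ vs) (ys1 @ ts)) \<chi>)))"
    using assms(1,2,5-7) unfolding inaccessible_def by blast
  have "\<exists>\<alpha>'\<in>U M. ltM M lt \<alpha>' z1 \<and> (\<forall>ts\<in>tuples_below M lt z0 (length vs).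
          sat M (assign e (w # vs) (\<alpha> # ts)) \<chi> \<longleftrightarrow> sat M (assign e (w # vs) (\<alpha>' # ts)) \<chi>)"
    if "\<alpha> \<in> U M" for \<alpha>
  proof -
    have "length [\<alpha>] = length [w] \<and> set [\<alpha>] \<subseteq> U M" using that by simp
    with swap obtain ys1 where "length ys1 = length [w]" "set ys1 \<subseteq> U M" "\<forall>y\<in>set ys1. ltM M lt y z1"
      and "\<forall>ts. length ts = length vs \<and> set ts \<subseteq> U M \<and> (\<forall>t\<in>set ts. ltM M lt t z0) \<longrightarrow>
          (sat M (assign e ([w] @ vs) ([\<alpha>] @ ts)) \<chi> \<longleftrightarrow> sat M (assign e ([w] @ vs) (ys1 @ ts)) \<chi>)"
      by blast
    then show ?thesis by (auto simp: length_Suc_conv tuples_below_def)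
  qed
  then show ?thesis using z1 by blast
qed

lemma inaccessible_thresholds:
  assumes lt2: "ra lt = 2" and inacc: "inaccessible A fa ra lt T"
    and wf: "wf_fm fa ra \<phi>" and dist: "distinct (x # vs)" and fv: "fv \<phi> \<subseteq> set (x # vs)"
    and M: "M \<in> models A fa ra T" and e: "is_env M e" and z0: "z0 \<in> U M"
  shows "\<exists>z1\<in>U M. \<forall>\<alpha>\<in>U M. \<exists>\<alpha>'\<in>U M. ltM M lt \<alpha>' z1 \<and>
           (\<forall>ts\<in>tuples_below M lt z0 (length vs).
              (\<forall>a\<in>U M. ltM M lt \<alpha> a \<longrightarrow> \<not> sat M (assign e (x # vs) (a # ts)) \<phi>) \<longleftrightarrow>
              (\<forall>a\<in>U M. ltM M lt \<alpha>' a \<longrightarrow> \<not> sat M (assign e (x # vs) (a # ts)) \<phi>))"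
proof -
  obtain w where w: "w \<notin> fv \<phi> \<union> set (x # vs)"
    using ex_new_if_finite[OF infinite_UNIV_nat, of "fv \<phi> \<union> set (x # vs)"] finite_fv by auto
  define \<chi> where "\<chi> = none_above lt w x \<phi>"
  have \<chi>: "wf_fm fa ra \<chi>" "distinct (w # vs)" "fv \<chi> \<subseteq> set (w # vs)"
    using lt2 wf dist fv w by (auto simp: \<chi>_def none_above_def)
  have sat_\<chi>: "sat M (assign e (w # vs) (\<alpha> # ts)) \<chi> \<longleftrightarrow>
      (\<forall>a\<in>U M. ltM M lt \<alpha> a \<longrightarrow> \<not> sat M (assign e (x # vs) (a # ts)) \<phi>)" for \<alpha> ts
  proof -
    have "w \<noteq> x" "w \<notin> fv \<phi>" using w by auto
    then show ?thesis by (simp add: \<chi>_def sat_none_above)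
  qed
  show ?thesis using inaccessible_unaryD[OF inacc \<chi> M e z0] by (simp only: sat_\<chi>)
qed

lemma regular_1_if_inaccessible:
  assumes lt2: "ra lt = 2" and lin: "lt_linear A fa ra lt T" and inacc: "inaccessible A fa ra lt T"
  shows "regular A fa ra lt T 1"
proof (rule regularI)
  fix \<phi> xs ys ts M e y0 bs
  assume xs1: "length xs = 1" and wf: "wf_fm fa ra \<phi>" and dist: "distinct (xs @ ys @ ts)"
    and fv: "fv \<phi> \<subseteq> set (xs @ ys @ ts)" and M: "M \<in> models A fa ra T" and e: "is_env M e"
    and y0: "y0 \<in> U M" and bs: "length bs = length ts" "set bs \<subseteq> U M"
  obtain x where xs: "xs = [x]" using xs1 by (auto simp: length_Suc_conv)
  have trans: "transp_on (U M) (ltM M lt)" using lt_linearD[OF lin M] by simp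
  show "regular_below M lt 1 (length ys) y0 (\<lambda>as cs. sat M (assign e (xs @ ys @ ts) (as @ cs @ bs)) \<phi>)"
    unfolding regular_below_def
  proof
    assume hyp: "unb M lt 1 (\<lambda>as. \<exists>cs\<in>tuples_below M lt y0 (length ys).
        sat M (assign e (xs @ ys @ ts) (as @ cs @ bs)) \<phi>)"
    then have no_max: "\<forall>\<alpha>\<in>U M. \<exists>a\<in>U M. ltM M lt \<alpha> a" by auto
    have "set (y0 # bs) \<subseteq> U M" using y0 bs by simp
    then obtain z0 where z0: "z0 \<in> U M" "\<forall>v\<in>set (y0 # bs). ltM M lt v z0"
      using ex_strict_upper_bound[OF lt_linearD[OF lin M] models_U_nonempty[OF M] no_max] by blast
    have "distinct (x # ys @ ts)" "fv \<phi> \<subseteq> set (x # ys @ ts)" using dist fv by (simp_all add: xs)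
    then obtain z1 where z1: "z1 \<in> U M" and thresholds: "\<forall>\<alpha>\<in>U M. \<exists>\<alpha>'\<in>U M. ltM M lt \<alpha>' z1 \<and>
        (\<forall>ts'\<in>tuples_below M lt z0 (length (ys @ ts)).
           (\<forall>a\<in>U M. ltM M lt \<alpha> a \<longrightarrow> \<not> sat M (assign e (x # ys @ ts) (a # ts')) \<phi>) \<longleftrightarrow>
           (\<forall>a\<in>U M. ltM M lt \<alpha>' a \<longrightarrow> \<not> sat M (assign e (x # ys @ ts) (a # ts')) \<phi>))"
      using inaccessible_thresholds[OF lt2 inacc wf _ _ M e z0(1)] by blast
    have "bs \<in> tuples_below M lt z0 (length ts)" "ltM M lt y0 z0"
      using bs z0(2) by (simp_all add: tuples_below_def)
    then have below_z0: "cs @ bs \<in> tuples_below M lt z0 (length (ys @ ts))"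
      if "cs \<in> tuples_below M lt y0 (length ys)" for cs
      using tuples_below_append[OF trans that _ y0 z0(1)] by simp
    show "\<exists>cs\<in>tuples_below M lt y0 (length ys). unb M lt 1 (\<lambda>as. sat M (assign e (xs @ ys @ ts) (as @ cs @ bs)) \<phi>)"
    proof (rule regular_below_1I[OF trans z1 _ hyp])
      fix \<alpha> assume "\<alpha> \<in> U M"
      with thresholds obtain \<alpha>' where \<alpha>': "\<alpha>' \<in> U M" "ltM M lt \<alpha>' z1" and th:
        "\<forall>ts'\<in>tuples_below M lt z0 (length (ys @ ts)).
           (\<forall>a\<in>U M. ltM M lt \<alpha> a \<longrightarrow> \<not> sat M (assign e (x # ys @ ts) (a # ts')) \<phi>) \<longleftrightarrow>
           (\<forall>a\<in>U M. ltM M lt \<alpha>' a \<longrightarrow> \<not> sat M (assign e (x # ys @ ts) (a # ts')) \<phi>)"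
        by blast
      have "(\<forall>a\<in>U M. ltM M lt \<alpha> a \<longrightarrow> \<not> sat M (assign e (xs @ ys @ ts) ([a] @ cs @ bs)) \<phi>) \<longleftrightarrow>
            (\<forall>a\<in>U M. ltM M lt \<alpha>' a \<longrightarrow> \<not> sat M (assign e (xs @ ys @ ts) ([a] @ cs @ bs)) \<phi>)"
        if "cs \<in> tuples_below M lt y0 (length ys)" for cs
        using bspec[OF th below_z0[OF that]] by (simp add: xs)
      with \<alpha>' show "\<exists>\<alpha>'\<in>U M. ltM M lt \<alpha>' z1 \<and> (\<forall>cs\<in>tuples_below M lt y0 (length ys).
          (\<forall>a\<in>U M. ltM M lt \<alpha> a \<longrightarrow> \<not> sat M (assign e (xs @ ys @ ts) ([a] @ cs @ bs)) \<phi>) \<longrightarrow>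
          (\<forall>a\<in>U M. ltM M lt \<alpha>' a \<longrightarrow> \<not> sat M (assign e (xs @ ys @ ts) ([a] @ cs @ bs)) \<phi>))"
        by blast
    qed
  qed
qed

lemma regular_1_unb_fm:
  assumes lt2: "ra lt = 2" and R1: "regular A fa ra lt T 1"
    and wf: "wf_fm fa ra \<phi>" and dist: "distinct (x # xs @ ys @ ts)" and fv: "fv \<phi> \<subseteq> set (x # xs @ ys @ ts)"
    and M: "M \<in> models A fa ra T" and e: "is_env M e" and y0: "y0 \<in> U M"
    and bs: "length bs = length ts" "set bs \<subseteq> U M"
  shows "regular_below M lt 1 (length ys) y0 (\<lambda>as cs.
           unb M lt (length xs) (\<lambda>as'. sat M (assign (assign e (x # ys @ ts) (as @ cs @ bs)) xs as') \<phi>))"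
proof -
  obtain \<alpha>s where \<alpha>s: "length \<alpha>s = length xs" "distinct \<alpha>s" "set \<alpha>s \<inter> (fv \<phi> \<union> set xs) = {}"
    using ex_distinct_fresh_vars[of "fv \<phi> \<union> set xs" "length xs"] finite_fv by auto
  define \<theta> where "\<theta> = unb_fm lt \<alpha>s xs \<phi>"
  have sat_\<theta>: "sat M E \<theta> \<longleftrightarrow> unb M lt (length xs) (\<lambda>as. sat M (assign E xs as) \<phi>)" for E
    using sat_unb_fm[of \<alpha>s xs \<phi> M E lt] \<alpha>s dist by (auto simp: \<theta>_def)
  have "fv \<theta> \<subseteq> set ([x] @ ys @ ts)"
    using fv_unb_fm[of \<alpha>s xs lt \<phi>] \<alpha>s(1) fv by (auto simp: \<theta>_def)
  then have "regular_below M lt 1 (length ys) y0 (\<lambda>as cs. sat M (assign e ([x] @ ys @ ts) (as @ cs @ bs)) \<theta>)"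
    by (intro regularD[OF R1 _ _ _ _ M e y0 bs]) (use lt2 wf dist in \<open>auto simp: \<theta>_def wf_unb_fm\<close>)
  then show ?thesis by (simp add: sat_\<theta>)
qed

lemma regular_Suc:
  assumes lt2: "ra lt = 2" and R1: "regular A fa ra lt T 1" and Rk: "regular A fa ra lt T k"
  shows "regular A fa ra lt T (Suc k)"
proof (rule regularI)
  fix \<phi> xs ys ts M e y0 bs
  assume xsk: "length xs = Suc k" and wf: "wf_fm fa ra \<phi>" and dist: "distinct (xs @ ys @ ts)"
    and fv: "fv \<phi> \<subseteq> set (xs @ ys @ ts)" and M: "M \<in> models A fa ra T" and e: "is_env M e"
    and y0: "y0 \<in> U M" and bs: "length bs = length ts" "set bs \<subseteq> U M"
  obtain x xs' where xs: "xs = x # xs'" and len: "length xs' = k" using xsk by (cases xs) auto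
  have dist': "distinct (x # xs' @ ys @ ts)" using dist xs by simp
  define P where "P = (\<lambda>as cs. sat M (assign e (xs @ ys @ ts) (as @ cs @ bs)) \<phi>)"
  have tail: "regular_below M lt k (length ys) y0 (\<lambda>as cs. P (a # as) cs)" if a: "a \<in> U M" for a
  proof -
    have "regular_below M lt k (length ys) y0
        (\<lambda>as cs. sat M (assign e (xs' @ ys @ x # ts) (as @ cs @ a # bs)) \<phi>)"
      by (rule regularD[OF Rk len wf _ _ M e y0]) (use dist fv bs a xs in auto)
    moreover have "regular_below M lt k (length ys) y0 (\<lambda>as cs. P (a # as) cs) \<longleftrightarrow>
        regular_below M lt k (length ys) y0 (\<lambda>as cs. sat M (assign e (xs' @ ys @ x # ts) (as @ cs @ a # bs)) \<phi>)"
      by (rule regular_below_cong) (simp add: P_def xs assign_shift_first[OF dist'] len tuples_below_def del: assign_Cons)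
    ultimately show ?thesis by simp
  qed
  have head_eq: "unb M lt k (\<lambda>as'. P (hd as # as') cs) \<longleftrightarrow>
      unb M lt (length xs') (\<lambda>as'. sat M (assign (assign e (x # ys @ ts) (as @ cs @ bs)) xs' as') \<phi>)"
    if as1: "length as = 1" and cs: "length cs = length ys" for as cs
  proof -
    obtain a where as: "as = [a]" using as1 by (auto simp: length_Suc_conv)
    have "unb M lt k (\<lambda>as'. P (a # as') cs) \<longleftrightarrow>
          unb M lt k (\<lambda>as'. sat M (assign (assign e (x # ys @ ts) (a # cs @ bs)) xs' as') \<phi>)"
      by (rule unb_cong) (simp add: P_def xs assign_split_first[OF dist'] len cs del: assign_Cons)
    then show ?thesis by (simp add: as len)
  qed
  have head: "regular_below M lt 1 (length ys) y0 (\<lambda>as cs. unb M lt k (\<lambda>as'. P (hd as # as') cs))"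
  proof -
    have "regular_below M lt 1 (length ys) y0 (\<lambda>as cs.
        unb M lt (length xs') (\<lambda>as'. sat M (assign (assign e (x # ys @ ts) (as @ cs @ bs)) xs' as') \<phi>))"
      by (rule regular_1_unb_fm[OF lt2 R1 wf _ _ M e y0 bs]) (use dist fv xs in auto)
    moreover have "regular_below M lt 1 (length ys) y0 (\<lambda>as cs. unb M lt k (\<lambda>as'. P (hd as # as') cs)) \<longleftrightarrow>
        regular_below M lt 1 (length ys) y0 (\<lambda>as cs.
          unb M lt (length xs') (\<lambda>as'. sat M (assign (assign e (x # ys @ ts) (as @ cs @ bs)) xs' as') \<phi>))"
      by (rule regular_below_cong) (simp add: head_eq tuples_below_def)
    ultimately show ?thesis by simp
  qed
  show "regular_below M lt (Suc k) (length ys) y0 (\<lambda>as cs. sat M (assign e (xs @ ys @ ts) (as @ cs @ bs)) \<phi>)"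
    using regular_below_Suc[OF tail head] by (simp only: P_def)
qed

theorem lemma2p3:
  fixes fa :: "'f \<Rightarrow> nat" and ra :: "'r \<Rightarrow> nat" and lt :: 'r
    and T :: "('f, 'r) fm set"
  assumes "countable (UNIV :: 'f set)" and "countable (UNIV :: 'r set)"
    and "ra lt = 2"
    and "complete_theory TYPE('a) fa ra T"
    and "has_skolem TYPE('a) fa ra T"
    and "lt_linear TYPE('a) fa ra lt T"
  shows "(inaccessible TYPE('a) fa ra lt T \<longrightarrow> regular TYPE('a) fa ra lt T 1)
       \<and> (regular TYPE('a) fa ra lt T 1 \<longrightarrow> (\<forall>k. regular TYPE('a) fa ra lt T k))"
proof (intro conjI impI allI)
  show "regular TYPE('a) fa ra lt T 1" if "inaccessible TYPE('a) fa ra lt T"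
    using regular_1_if_inaccessible[OF assms(3,6) that] .
next
  fix k
  assume "regular TYPE('a) fa ra lt T 1"
  then show "regular TYPE('a) fa ra lt T k"
    by (induction k) (simp_all add: regular_0 regular_Suc[where ra = ra and lt = lt, OF assms(3)])
qed

end
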